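(* Let $G$ be a connected graph and let $v\in V(G)$ be a cut-vertex such that $G-v$ has exactly two connected components $G_1$ and $G_2$. If $G[V(G_i)\cup\{v\}]$ is isomorphic to a path for $i=1$ or for $i=2$, then $v$ is not a basis forced vertex of $G$.
   Context: All graphs are finite and simple. For vertices $u,v$ of a connected graph $G$, $d(u,v)$ is the length of a shortest $u$–$v$ path. A set $R\subseteq V(G)$ is a resolving set if for all distinct $x,y\in V(G)$ there is $r\in R$ with $d(r,x)\neq d(r,y)$. The metric dimension $\dim(G)$ is the minimum cardinality of a resolving set, and a resolving set of cardinality $\dim(G)$ is a metric basis. A vertex is a basis forced vertex if it belongs to every metric basis of $G$. A cut-vertex is a vertex $v$ such that $G-v$ is disconnected; $G[S]$ denotes the subgraph induced by $S$. *)

theory Defs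
  imports Main
begin

definition graph :: "'a set \<Rightarrow> ('a \<Rightarrow> 'a \<Rightarrow> bool) \<Rightarrow> bool" where
  "graph V E \<longleftrightarrow> finite V \<and> (\<forall>x y. E x y \<longrightarrow> x \<in> V \<and> y \<in> V)
     \<and> (\<forall>x y. E x y \<longrightarrow> E y x) \<and> (\<forall>x. \<not> E x x)"

definition walk :: "'a set \<Rightarrow> ('a \<Rightarrow> 'a \<Rightarrow> bool) \<Rightarrow> 'a list \<Rightarrow> bool" where
  "walk V E xs \<longleftrightarrow> xs \<noteq> [] \<and> set xs \<subseteq> V \<and>
     (\<forall>i. Suc i < length xs \<longrightarrow> E (xs ! i) (xs ! Suc i))"

definition reachable :: "'a set \<Rightarrow> ('a \<Rightarrow> 'a \<Rightarrow> bool) \<Rightarrow> 'a \<Rightarrow> 'a \<Rightarrow> bool" where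
  "reachable V E u w \<longleftrightarrow> (\<exists>xs. walk V E xs \<and> hd xs = u \<and> last xs = w)"

definition connected_graph :: "'a set \<Rightarrow> ('a \<Rightarrow> 'a \<Rightarrow> bool) \<Rightarrow> bool" where
  "connected_graph V E \<longleftrightarrow> V \<noteq> {} \<and> (\<forall>u\<in>V. \<forall>w\<in>V. reachable V E u w)"

definition components :: "'a set \<Rightarrow> ('a \<Rightarrow> 'a \<Rightarrow> bool) \<Rightarrow> 'a set set" where
  "components V E = {{w. reachable V E u w} | u. u \<in> V}"

definition dist :: "'a set \<Rightarrow> ('a \<Rightarrow> 'a \<Rightarrow> bool) \<Rightarrow> 'a \<Rightarrow> 'a \<Rightarrow> nat" where
  "dist V E u w = (LEAST n. \<exists>xs. walk V E xs \<and> hd xs = u \<and> last xs = w \<and> length xs = Suc n)"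

definition resolving_set :: "'a set \<Rightarrow> ('a \<Rightarrow> 'a \<Rightarrow> bool) \<Rightarrow> 'a set \<Rightarrow> bool" where
  "resolving_set V E R \<longleftrightarrow> R \<subseteq> V \<and>
     (\<forall>x\<in>V. \<forall>y\<in>V. x \<noteq> y \<longrightarrow> (\<exists>r\<in>R. dist V E r x \<noteq> dist V E r y))"

definition metric_dim :: "'a set \<Rightarrow> ('a \<Rightarrow> 'a \<Rightarrow> bool) \<Rightarrow> nat" where
  "metric_dim V E = (LEAST k. \<exists>R. resolving_set V E R \<and> card R = k)"

definition metric_basis :: "'a set \<Rightarrow> ('a \<Rightarrow> 'a \<Rightarrow> bool) \<Rightarrow> 'a set \<Rightarrow> bool" where
  "metric_basis V E R \<longleftrightarrow> resolving_set V E R \<and> card R = metric_dim V E"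

definition basis_forced :: "'a set \<Rightarrow> ('a \<Rightarrow> 'a \<Rightarrow> bool) \<Rightarrow> 'a \<Rightarrow> bool" where
  "basis_forced V E v \<longleftrightarrow> (\<forall>R. metric_basis V E R \<longrightarrow> v \<in> R)"

text \<open>The graph with vertex set S and edges E restricted to S (i.e. the induced subgraph G[S])
  is isomorphic to a path P_n.\<close>
definition is_path_graph :: "'a set \<Rightarrow> ('a \<Rightarrow> 'a \<Rightarrow> bool) \<Rightarrow> bool" where
  "is_path_graph S E \<longleftrightarrow> (\<exists>n f. bij_betw f {0..<n} S \<and>
     (\<forall>i<n. \<forall>j<n. E (f i) (f j) \<longleftrightarrow> (j = Suc i \<or> i = Suc j)))"

end

theory Submission
  imports Defs
begin

text \<open>Let \<open>u\<close> be the far end of the path \<open>G[V(G\<^sub>i) \<union> {v}]\<close>, which starts at \<open>v\<close> because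
  \<open>G\<^sub>i\<close> is connected. Every walk leaving \<open>G\<^sub>i\<close> passes through \<open>v\<close>, so \<open>d(u,x) = d(u,v) + d(v,x)\<close>
  for \<open>x \<notin> V(G\<^sub>i)\<close>, while the vertices of \<open>G\<^sub>i\<close> have pairwise different distances to \<open>u\<close>, all
  smaller than \<open>d(u,v)\<close>. Hence \<open>u\<close> resolves every pair that \<open>v\<close> resolves, and exchanging
  \<open>v\<close> for \<open>u\<close> in a metric basis yields a metric basis avoiding \<open>v\<close>.\<close>

lemma walk_singleton: "x \<in> W \<Longrightarrow> walk W E [x]"
  by (simp add: walk_def)

lemma walk_Cons_Cons: "walk W E (x # y # ys) \<longleftrightarrow> x \<in> W \<and> E x y \<and> walk W E (y # ys)"
proof
  assume walk: "walk W E (x # y # ys)"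
  show "x \<in> W \<and> E x y \<and> walk W E (y # ys)"
    unfolding walk_def
  proof (intro conjI allI impI)
    fix i assume "Suc i < length (y # ys)"
    with walk show "E ((y # ys) ! i) ((y # ys) ! Suc i)"
      unfolding walk_def by (metis Suc_less_eq length_Cons nth_Cons_Suc)
  qed (use walk in \<open>auto simp: walk_def\<close>)
next
  assume "x \<in> W \<and> E x y \<and> walk W E (y # ys)"
  then show "walk W E (x # y # ys)"
    unfolding walk_def by (auto simp: less_Suc_eq_0_disj)
qed

lemma walk_rev:
  assumes "\<forall>x y. E x y \<longrightarrow> E y x" and "walk W E xs"
  shows "walk W E (rev xs)"
  unfolding walk_def
proof (intro conjI allI impI)
  show "rev xs \<noteq> []" "set (rev xs) \<subseteq> W" using assms(2) by (auto simp: walk_def)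
  fix i assume i: "Suc i < length (rev xs)"
  let ?j = "length xs - Suc (Suc i)"
  have "E (xs ! ?j) (xs ! Suc ?j)" using assms(2) i unfolding walk_def by auto
  moreover have "Suc ?j = length xs - Suc i" using i by simp
  ultimately show "E (rev xs ! i) (rev xs ! Suc i)"
    using i assms(1) by (simp add: rev_nth)
qed

lemma walk_append:
  assumes "walk W E xs" "walk W E ys" "last xs = hd ys"
  shows "walk W E (xs @ tl ys)" "hd (xs @ tl ys) = hd xs" "last (xs @ tl ys) = last ys"
    "length (xs @ tl ys) = length xs + length ys - 1"
proof -
  have "xs \<noteq> []" "ys \<noteq> []" using assms(1,2) by (auto simp: walk_def)
  then show "hd (xs @ tl ys) = hd xs" "last (xs @ tl ys) = last ys"
    "length (xs @ tl ys) = length xs + length ys - 1"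
    using assms(3) by (cases ys; simp)+
  show "walk W E (xs @ tl ys)" using \<open>xs \<noteq> []\<close> assms(1,3)
  proof (induction xs rule: list_nonempty_induct)
    case (single x)
    then show ?case using assms(2) by (cases ys) auto
  next
    case (cons x xs)
    then obtain y zs where "xs = y # zs" by (cases xs) auto
    with cons show ?case by (simp add: walk_Cons_Cons)
  qed
qed

lemma walk_mono: "walk W E xs \<Longrightarrow> set xs \<subseteq> W' \<Longrightarrow> walk W' E xs"
  unfolding walk_def by auto

lemma walk_potential_bound:
  fixes \<psi> :: "'a \<Rightarrow> int"
  assumes "walk W E xs" and "\<forall>a\<in>W. \<forall>b\<in>W. E a b \<longrightarrow> \<psi> b \<le> \<psi> a + c"
  shows "\<psi> (last xs) \<le> \<psi> (hd xs) + c * int (length xs - 1)"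
proof -
  have "xs \<noteq> []" using assms(1) by (simp add: walk_def)
  then show ?thesis using assms(1)
  proof (induction xs rule: list_nonempty_induct)
    case (single x)
    then show ?case by simp
  next
    case (cons x xs)
    then obtain y zs where xs: "xs = y # zs" by (cases xs) auto
    with cons.prems have "walk W E xs" "x \<in> W" "y \<in> W" "E x y"
      by (auto simp: walk_Cons_Cons walk_def)
    then have "\<psi> (last xs) \<le> \<psi> y + c * int (length xs - 1)" "\<psi> y \<le> \<psi> x + c"
      using cons.IH assms(2) xs by auto
    then show ?case using xs by (simp add: algebra_simps)
  qed
qed

lemma reachable_in: "reachable W E a b \<Longrightarrow> a \<in> W \<and> b \<in> W"
  unfolding reachable_def walk_def by (metis hd_in_set last_in_set subsetD)

lemma reachable_refl: "a \<in> W \<Longrightarrow> reachable W E a a"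
  unfolding reachable_def using walk_singleton by force

lemma reachable_edge: "a \<in> W \<Longrightarrow> b \<in> W \<Longrightarrow> E a b \<Longrightarrow> reachable W E a b"
  unfolding reachable_def
  by (rule exI[of _ "[a, b]"]) (simp add: walk_Cons_Cons walk_singleton)

lemma reachable_trans:
  assumes "reachable W E a b" "reachable W E b c"
  shows "reachable W E a c"
proof -
  obtain xs ys where walks: "walk W E xs" "hd xs = a" "last xs = b"
    "walk W E ys" "hd ys = b" "last ys = c"
    using assms unfolding reachable_def by blast
  then show ?thesis
    unfolding reachable_def using walk_append[of W E xs ys] by metis
qed

lemma reachable_sym: "\<forall>x y. E x y \<longrightarrow> E y x \<Longrightarrow> reachable W E a b \<Longrightarrow> reachable W E b a"
  unfolding reachable_def by (metis walk_rev hd_rev last_rev)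

lemma dist_le_walk:
  assumes "walk V E xs" "hd xs = a" "last xs = b"
  shows "dist V E a b \<le> length xs - 1"
proof -
  have "length xs = Suc (length xs - 1)" using assms(1) by (cases xs) (auto simp: walk_def)
  then show ?thesis unfolding dist_def using assms by (metis (mono_tags, lifting) Least_le)
qed

lemma shortest_walk:
  assumes "reachable V E a b"
  obtains xs where "walk V E xs" "hd xs = a" "last xs = b" "length xs = Suc (dist V E a b)"
proof -
  obtain xs where xs: "walk V E xs" "hd xs = a" "last xs = b"
    using assms unfolding reachable_def by blast
  then have "length xs = Suc (length xs - 1)" by (cases xs) (auto simp: walk_def)
  with xs have "\<exists>n xs. walk V E xs \<and> hd xs = a \<and> last xs = b \<and> length xs = Suc n" by blast
  then have "\<exists>xs. walk V E xs \<and> hd xs = a \<and> last xs = b \<and> length xs = Suc (dist V E a b)"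
    unfolding dist_def by (rule LeastI_ex)
  then show ?thesis using that by blast
qed

lemma dist_self: "x \<in> V \<Longrightarrow> dist V E x x = 0"
  using dist_le_walk[of V E "[x]" x x] walk_singleton by fastforce

lemma dist_eq_0_imp_eq:
  assumes "reachable V E x y" "dist V E x y = 0"
  shows "x = y"
proof -
  obtain xs where "hd xs = x" "last xs = y" "length xs = Suc 0"
    using shortest_walk[OF assms(1)] assms(2) by auto
  then show ?thesis by (auto simp: length_Suc_conv)
qed

lemma dist_edge: "a \<in> V \<Longrightarrow> b \<in> V \<Longrightarrow> E a b \<Longrightarrow> dist V E a b \<le> 1"
  using dist_le_walk[of V E "[a, b]" a b] by (simp add: walk_Cons_Cons walk_singleton)

lemma dist_triangle:
  assumes "reachable V E a b" "reachable V E b c"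
  shows "dist V E a c \<le> dist V E a b + dist V E b c"
proof -
  obtain xs where xs: "walk V E xs" "hd xs = a" "last xs = b" "length xs = Suc (dist V E a b)"
    using assms(1) by (rule shortest_walk)
  obtain ys where ys: "walk V E ys" "hd ys = b" "last ys = c" "length ys = Suc (dist V E b c)"
    using assms(2) by (rule shortest_walk)
  have "dist V E a c \<le> length (xs @ tl ys) - 1"
    using walk_append[OF xs(1) ys(1)] xs(2,3) ys(2,3) by (intro dist_le_walk) auto
  then show ?thesis using walk_append(4)[OF xs(1) ys(1)] xs ys by simp
qed

lemma dist_lower_bound_potential:
  fixes \<psi> :: "'a \<Rightarrow> int"
  assumes "reachable V E a b" and "\<forall>x\<in>V. \<forall>y\<in>V. E x y \<longrightarrow> \<psi> y \<le> \<psi> x + 1"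
  shows "\<psi> b \<le> \<psi> a + int (dist V E a b)"
proof -
  obtain xs where "walk V E xs" "hd xs = a" "last xs = b" "length xs = Suc (dist V E a b)"
    using assms(1) by (rule shortest_walk)
  then show ?thesis using walk_potential_bound[of V E xs \<psi> 1] assms(2) by simp
qed

lemma component_obtain:
  assumes "C \<in> components W E"
  obtains c where "c \<in> W" "C = {w. reachable W E c w}"
  using assms unfolding components_def by blast

lemma component_subset: "C \<in> components W E \<Longrightarrow> C \<subseteq> W"
  by (metis component_obtain mem_Collect_eq reachable_in subsetI)

lemma component_nonempty: "C \<in> components W E \<Longrightarrow> C \<noteq> {}"
  by (metis component_obtain empty_iff mem_Collect_eq reachable_refl)

lemma component_edge_closed:
  assumes "C \<in> components W E" "a \<in> C" "b \<in> W" "E a b"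
  shows "b \<in> C"
proof -
  obtain c where C: "C = {w. reachable W E c w}" using assms(1) by (rule component_obtain)
  have "a \<in> W" using assms(1,2) component_subset by blast
  then have "reachable W E a b" using assms(3,4) by (rule reachable_edge)
  moreover have "reachable W E c a" using assms(2) C by simp
  ultimately show ?thesis using C reachable_trans by fastforce
qed

lemma walk_in_component:
  assumes "C \<in> components W E" "walk W E xs" "hd xs \<in> C"
  shows "set xs \<subseteq> C"
proof -
  have "xs \<noteq> []" using assms(2) by (simp add: walk_def)
  then show ?thesis using assms(2,3)
  proof (induction xs rule: list_nonempty_induct)
    case (single x)
    then show ?case by simp
  next
    case (cons x xs)
    then obtain y zs where xs: "xs = y # zs" by (cases xs) auto
    with cons.prems have "walk W E xs" "y \<in> W" "E x y"
      by (auto simp: walk_Cons_Cons walk_def)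
    with cons xs have "y \<in> C" using component_edge_closed[OF assms(1)] by simp
    with cons \<open>walk W E xs\<close> xs show ?case by simp
  qed
qed

lemma component_reachable_within:
  assumes "\<forall>x y. E x y \<longrightarrow> E y x" "C \<in> components W E" "a \<in> C" "b \<in> C"
  shows "reachable C E a b"
proof -
  obtain c where "C = {w. reachable W E c w}" using assms(2) by (rule component_obtain)
  with assms have "reachable W E a b" by (metis mem_Collect_eq reachable_sym reachable_trans)
  then obtain xs where xs: "walk W E xs" "hd xs = a" "last xs = b"
    unfolding reachable_def by blast
  then have "walk C E xs" using walk_in_component[OF assms(2)] assms(3) walk_mono by blast
  with xs show ?thesis unfolding reachable_def by blast
qed

lemma component_of_cut_attached:
  assumes "graph V E" "C \<in> components (V - {v}) E" "a \<in> C" "E a b"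
  shows "b \<in> C \<union> {v}"
  using assms component_edge_closed[OF assms(2,3)] unfolding graph_def by blast

lemma path_enum_reverse:
  assumes "bij_betw f {0..<n} P" "\<forall>i<n. \<forall>j<n. E (f i) (f j) \<longleftrightarrow> (j = Suc i \<or> i = Suc j)"
  shows "bij_betw (\<lambda>i. f (n - 1 - i)) {0..<n} P"
    "\<forall>i<n. \<forall>j<n. E (f (n - 1 - i)) (f (n - 1 - j)) \<longleftrightarrow> (j = Suc i \<or> i = Suc j)"
proof -
  have "bij_betw (\<lambda>i. n - 1 - i) {0..<n} {0..<n}"
    by (rule bij_betw_byWitness[where f' = "\<lambda>i. n - 1 - i"]) auto
  from bij_betw_trans[OF this assms(1)] show "bij_betw (\<lambda>i. f (n - 1 - i)) {0..<n} P"
    by (simp add: comp_def)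
  show "\<forall>i<n. \<forall>j<n. E (f (n - 1 - i)) (f (n - 1 - j)) \<longleftrightarrow> (j = Suc i \<or> i = Suc j)"
    using assms(2) by auto
qed

lemma path_enum_nonseparating_is_end:
  assumes bij: "bij_betw f {0..<n} P"
    and edges: "\<forall>i<n. \<forall>j<n. E (f i) (f j) \<longleftrightarrow> (j = Suc i \<or> i = Suc j)"
    and k: "k < n"
    and conn: "\<forall>a\<in>P - {f k}. \<forall>b\<in>P - {f k}. reachable (P - {f k}) E a b"
  shows "k = 0 \<or> k = n - 1"
proof (rule ccontr)
  assume "\<not> (k = 0 \<or> k = n - 1)"
  then have k_inner: "0 < k" "k + 1 < n" using k by auto
  define idx where "idx = inv_into {0..<n} f"
  have inj: "inj_on f {0..<n}" using bij by (rule bij_betw_imp_inj_on)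
  have idx_f: "idx (f i) = i" if "i < n" for i
    unfolding idx_def using inj that by (simp add: inv_into_f_f)
  have f_idx: "idx x < n" "f (idx x) = x" if "x \<in> P" for x
    using that bij_betw_imp_surj_on[OF bij] inv_into_into[of x f "{0..<n}"]
      f_inv_into_f[of x f "{0..<n}"] unfolding idx_def by auto
  define side :: "'a \<Rightarrow> int" where "side x = (if idx x < k then 0 else 1)" for x
  have side_const: "side y \<le> side x + 0" if "x \<in> P - {f k}" "y \<in> P - {f k}" "E x y" for x y
  proof -
    have x: "idx x < n" "f (idx x) = x" and y: "idx y < n" "f (idx y) = y"
      using that(1,2) f_idx by blast+
    then have "idx x \<noteq> k" "idx y \<noteq> k" using that(1,2) by (metis DiffD2 singletonI)+
    moreover have "idx y = Suc (idx x) \<or> idx x = Suc (idx y)"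
      using edges x y that(3) by metis
    ultimately show ?thesis unfolding side_def by auto
  qed
  have "f (k - 1) \<noteq> f k" "f (k + 1) \<noteq> f k"
    using k_inner inj_on_eq_iff[OF inj] by auto
  then have "f (k - 1) \<in> P - {f k}" "f (k + 1) \<in> P - {f k}"
    using k_inner bij_betw_apply[OF bij] by auto
  then obtain xs where xs: "walk (P - {f k}) E xs" "hd xs = f (k - 1)" "last xs = f (k + 1)"
    using conn unfolding reachable_def by blast
  have "side (f (k + 1)) \<le> side (f (k - 1))"
    using walk_potential_bound[OF xs(1), of side 0] side_const xs(2,3) by auto
  then show False using k_inner idx_f unfolding side_def by simp
qed

lemma path_enum_from_cut_vertex:
  assumes "is_path_graph (C \<union> {v}) E" "v \<notin> C" "\<forall>a\<in>C. \<forall>b\<in>C. reachable C E a b"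
  obtains f n where "bij_betw f {0..<n} (C \<union> {v})"
    "\<forall>i<n. \<forall>j<n. E (f i) (f j) \<longleftrightarrow> (j = Suc i \<or> i = Suc j)" "f 0 = v"
proof -
  obtain f n where bij: "bij_betw f {0..<n} (C \<union> {v})"
    and edges: "\<forall>i<n. \<forall>j<n. E (f i) (f j) \<longleftrightarrow> (j = Suc i \<or> i = Suc j)"
    using assms(1) unfolding is_path_graph_def by blast
  have "v \<in> f ` {0..<n}" using bij_betw_imp_surj_on[OF bij] by simp
  then obtain k where k: "k < n" "f k = v" by auto
  have "C \<union> {v} - {f k} = C" using assms(2) k(2) by auto
  then have "k = 0 \<or> k = n - 1"
    using path_enum_nonseparating_is_end[OF bij edges k(1)] assms(3) by presburger
  then show ?thesis
  proof
    assume "k = 0"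
    then show ?thesis using that[OF bij edges] k by simp
  next
    assume "k = n - 1"
    then show ?thesis using that[OF path_enum_reverse[OF bij edges]] k by simp
  qed
qed

lemma connected_resolving_set_vertices:
  assumes "connected_graph V E"
  shows "resolving_set V E V"
  unfolding resolving_set_def
proof (intro conjI ballI impI)
  fix x y assume xy: "x \<in> V" "y \<in> V" "x \<noteq> y"
  have "dist V E x y \<noteq> 0"
    using assms xy dist_eq_0_imp_eq unfolding connected_graph_def by metis
  then show "\<exists>r\<in>V. dist V E r x \<noteq> dist V E r y" using xy(1) dist_self by metis
qed simp

lemma connected_metric_basis_exists:
  assumes "connected_graph V E"
  obtains R where "metric_basis V E R"
proof -
  have "\<exists>k R. resolving_set V E R \<and> card R = k"
    using connected_resolving_set_vertices[OF assms] by blast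
  then have "\<exists>R. resolving_set V E R \<and> card R = metric_dim V E"
    unfolding metric_dim_def by (rule LeastI_ex)
  then show ?thesis using that unfolding metric_basis_def by blast
qed

lemma resolving_set_exchange:
  assumes "resolving_set V E R" "u \<in> V"
    and "\<forall>x\<in>V. \<forall>y\<in>V. dist V E v x \<noteq> dist V E v y \<longrightarrow> dist V E u x \<noteq> dist V E u y"
  shows "resolving_set V E (insert u (R - {v}))"
  unfolding resolving_set_def
proof (intro conjI ballI impI)
  show "insert u (R - {v}) \<subseteq> V" using assms(1,2) unfolding resolving_set_def by blast
  fix x y assume xy: "x \<in> V" "y \<in> V" "x \<noteq> y"
  then obtain r where r: "r \<in> R" "dist V E r x \<noteq> dist V E r y"
    using assms(1) unfolding resolving_set_def by blast
  show "\<exists>r\<in>insert u (R - {v}). dist V E r x \<noteq> dist V E r y"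
  proof (cases "r = v")
    case True
    with r(2) xy(1,2) assms(3) show ?thesis by blast
  next
    case False
    with r show ?thesis by blast
  qed
qed

lemma not_basis_forced_if_resolves_more:
  assumes "finite V" "connected_graph V E" "u \<in> V" "u \<noteq> v"
    and "\<forall>x\<in>V. \<forall>y\<in>V. dist V E v x \<noteq> dist V E v y \<longrightarrow> dist V E u x \<noteq> dist V E u y"
  shows "\<not> basis_forced V E v"
proof -
  obtain R where R: "metric_basis V E R" using assms(2) by (rule connected_metric_basis_exists)
  show ?thesis
  proof (cases "v \<in> R")
    case False
    with R show ?thesis unfolding basis_forced_def by blast
  next
    case True
    define R' where "R' = insert u (R - {v})"
    have "resolving_set V E R" "card R = metric_dim V E"
      using R unfolding metric_basis_def by auto
    then have res: "resolving_set V E R'" and "finite R"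
      using resolving_set_exchange[OF _ assms(3,5)] assms(1) finite_subset
      unfolding R'_def resolving_set_def by auto
    then have "card R' \<le> card R"
      unfolding R'_def using True by (intro card_insert_le_m1) (auto simp: card_gt_0_iff)
    moreover have "metric_dim V E \<le> card R'"
      unfolding metric_dim_def using res by (intro Least_le) blast
    ultimately have "metric_basis V E R'"
      using res \<open>card R = metric_dim V E\<close> unfolding metric_basis_def by linarith
    moreover have "v \<notin> R'" unfolding R'_def using assms(4) by simp
    ultimately show ?thesis unfolding basis_forced_def by blast
  qed
qed

locale pendant_path =
  fixes V :: "'a set" and E :: "'a \<Rightarrow> 'a \<Rightarrow> bool" and C :: "'a set" and v :: 'a
    and f :: "nat \<Rightarrow> 'a" and n :: nat
  assumes graph: "graph V E"
    and connected: "connected_graph V E"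
    and subset: "C \<union> {v} \<subseteq> V"
    and v_notin: "v \<notin> C"
    and nonempty: "C \<noteq> {}"
    and enum: "bij_betw f {0..<n} (C \<union> {v})"
    and path_edges: "\<forall>i<n. \<forall>j<n. E (f i) (f j) \<longleftrightarrow> (j = Suc i \<or> i = Suc j)"
    and start: "f 0 = v"
    and attached: "\<forall>a\<in>C. \<forall>b. E a b \<longrightarrow> b \<in> C \<union> {v}"
begin

definition idx :: "'a \<Rightarrow> nat" where
  "idx = inv_into {0..<n} f"

definition far_end :: 'a where
  "far_end = f (n - 1)"

lemma reachable_all: "x \<in> V \<Longrightarrow> y \<in> V \<Longrightarrow> reachable V E x y"
  using connected unfolding connected_graph_def by blast

lemma idx_f: "i < n \<Longrightarrow> idx (f i) = i"
  unfolding idx_def using bij_betw_imp_inj_on[OF enum] by (simp add: inv_into_f_f)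

lemma f_idx: "x \<in> C \<union> {v} \<Longrightarrow> idx x < n \<and> f (idx x) = x"
  using bij_betw_imp_surj_on[OF enum] inv_into_into[of x f "{0..<n}"]
    f_inv_into_f[of x f "{0..<n}"] unfolding idx_def by auto

lemma idx_pos: "x \<in> C \<Longrightarrow> 0 < idx x"
  using f_idx[of x] start v_notin by (metis UnI1 gr0I)

lemma two_le_n: "2 \<le> n"
proof -
  obtain c where "c \<in> C" using nonempty by blast
  then have "idx v = 0" "0 < idx c" "idx c < n" using idx_f[of 0] f_idx[of c] idx_pos start
    by (auto simp: gr0I)
  then show ?thesis by linarith
qed

lemma far_end_in: "far_end \<in> C"
proof -
  have "far_end \<in> C \<union> {v}" "far_end \<noteq> v"
    unfolding far_end_def using bij_betw_apply[OF enum] idx_f[of 0] idx_f[of "n - 1"] start two_le_n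
    by auto
  then show ?thesis by blast
qed

lemma far_end_ne_start: "far_end \<noteq> v"
  using far_end_in v_notin by blast

lemma dist_far_end_le: "i < n \<Longrightarrow> dist V E far_end (f i) \<le> n - 1 - i"
proof -
  assume i: "i < n"
  have "walk V E (map f [i..<n])"
    unfolding walk_def using i path_edges bij_betw_apply[OF enum] subset by fastforce
  then have "walk V E (rev (map f [i..<n]))"
    using graph walk_rev unfolding graph_def by blast
  moreover have "hd (rev (map f [i..<n])) = far_end"
    unfolding far_end_def using i by (simp add: hd_rev last_map)
  moreover have "last (rev (map f [i..<n])) = f i"
    using i by (simp add: last_rev upt_conv_Cons)
  ultimately show ?thesis using dist_le_walk by fastforce
qed

text \<open>\<open>level x\<close> is the intended value of \<open>dist far_end x - (n - 1)\<close>; being 1-Lipschitz along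
  edges, it bounds that distance from below.\<close>

definition level :: "'a \<Rightarrow> int" where
  "level x = (if x \<in> C then - int (idx x) else int (dist V E v x))"

lemma edge_idx:
  assumes "a \<in> C \<union> {v}" "b \<in> C \<union> {v}" "E a b"
  shows "idx b = Suc (idx a) \<or> idx a = Suc (idx b)"
proof -
  have a: "idx a < n" "f (idx a) = a" and b: "idx b < n" "f (idx b) = b"
    using f_idx assms(1,2) by blast+
  then have "E (f (idx a)) (f (idx b))" using assms(3) by simp
  then show ?thesis using path_edges a(1) b(1) by blast
qed

lemma level_lipschitz:
  assumes "a \<in> V" "b \<in> V" "E a b"
  shows "level b \<le> level a + 1"
proof (cases "a \<in> C")
  case a: True
  show ?thesis
  proof (cases "b \<in> C")
    case True
    with a assms(3) have "idx b = Suc (idx a) \<or> idx a = Suc (idx b)"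
      by (intro edge_idx) auto
    with a True show ?thesis unfolding level_def by auto
  next
    case False
    with a assms(3) attached have "b = v" by blast
    moreover have "idx v = 0" using idx_f[of 0] start two_le_n by simp
    ultimately have "idx a = 1" using edge_idx[of a b] a assms(3) by simp
    with a False \<open>b = v\<close> show ?thesis unfolding level_def using dist_self subset by auto
  qed
next
  case a: False
  show ?thesis
  proof (cases "b \<in> C")
    case True
    with a show ?thesis unfolding level_def by simp
  next
    case False
    have "reachable V E v a" using subset assms(1) reachable_all by blast
    then have "dist V E v b \<le> dist V E v a + dist V E a b"
      using reachable_all[OF assms(1,2)] by (rule dist_triangle)
    with a False show ?thesis unfolding level_def using dist_edge[of a V b E] assms by simp
  qed
qed

lemma dist_far_end: "x \<in> V \<Longrightarrow> int (dist V E far_end x) = int (n - 1) + level x"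
proof -
  assume x: "x \<in> V"
  have "level far_end = - int (n - 1)"
    unfolding level_def far_end_def using far_end_in idx_f[of "n - 1"] two_le_n
    by (simp add: far_end_def)
  moreover have "level x \<le> level far_end + int (dist V E far_end x)"
    using reachable_all[OF _ x] far_end_in subset level_lipschitz
    by (intro dist_lower_bound_potential) auto
  moreover have "int (dist V E far_end x) \<le> int (n - 1) + level x"
  proof (cases "x \<in> C")
    case True
    then show ?thesis
      using dist_far_end_le[of "idx x"] f_idx[of x] idx_pos[of x] unfolding level_def by auto
  next
    case False
    have "dist V E far_end x \<le> dist V E far_end v + dist V E v x"
      using subset x far_end_in reachable_all by (intro dist_triangle) auto
    moreover have "dist V E far_end v \<le> n - 1" using dist_far_end_le[of 0] start two_le_n by simp
    ultimately show ?thesis using False unfolding level_def by simp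
  qed
  ultimately show ?thesis by linarith
qed

lemma far_end_resolves_more:
  assumes "x \<in> V" "y \<in> V" "dist V E v x \<noteq> dist V E v y"
  shows "dist V E far_end x \<noteq> dist V E far_end y"
proof -
  have level_neg: "level z < 0 \<longleftrightarrow> z \<in> C" for z
    using idx_pos[of z] unfolding level_def by auto
  have "level x \<noteq> level y"
  proof (cases "x \<in> C \<and> y \<in> C")
    case True
    moreover have "x \<noteq> y" using assms(3) by blast
    ultimately have "idx x \<noteq> idx y" using f_idx[of x] f_idx[of y] by (metis UnI1)
    with True show ?thesis unfolding level_def by simp
  next
    case False
    with assms(3) level_neg show ?thesis unfolding level_def by (metis of_nat_eq_iff)
  qed
  then show ?thesis using dist_far_end assms(1,2) by (metis add_left_cancel)
qed

end

theorem theorem2: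
  fixes V :: "'a set" and E :: "'a \<Rightarrow> 'a \<Rightarrow> bool" and v :: 'a and G1 G2 :: "'a set"
  assumes "graph V E"
    and "connected_graph V E"
    and "v \<in> V"
    and "components (V - {v}) E = {G1, G2}"
    and "G1 \<noteq> G2"
    and "is_path_graph (G1 \<union> {v}) E \<or> is_path_graph (G2 \<union> {v}) E"
  shows "\<not> basis_forced V E v"
proof -
  obtain C where C: "C \<in> components (V - {v}) E" "is_path_graph (C \<union> {v}) E"
    using assms(4,6) by blast
  have sym: "\<forall>x y. E x y \<longrightarrow> E y x" using assms(1) unfolding graph_def by blast
  have "C \<subseteq> V - {v}" "C \<noteq> {}"
    using component_subset[OF C(1)] component_nonempty[OF C(1)] by auto
  obtain f n where path: "bij_betw f {0..<n} (C \<union> {v})"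
    "\<forall>i<n. \<forall>j<n. E (f i) (f j) \<longleftrightarrow> (j = Suc i \<or> i = Suc j)" "f 0 = v"
    using path_enum_from_cut_vertex[OF C(2)] \<open>C \<subseteq> V - {v}\<close>
      component_reachable_within[OF sym C(1)] by blast
  interpret pendant_path V E C v f n
    using assms(1-3) \<open>C \<subseteq> V - {v}\<close> \<open>C \<noteq> {}\<close> path component_of_cut_attached[OF assms(1) C(1)]
    by unfold_locales auto
  show ?thesis
    using assms(1,2) far_end_in subset far_end_ne_start far_end_resolves_more
    by (intro not_basis_forced_if_resolves_more) (auto simp: graph_def)
qed

end
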